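(* Suppose $F$ is symmetric ($F(-i)=1-F(i)$ for all $i$), and consider the infinite-learning recommendation system with threshold $R\in(0,1)$. Let $\lambda=q_1/q_2$, $\sigma=q_H/q_L$ and, for $\lambda\ne1$, $\tilde i_\infty=\frac{(\sigma-1)(\lambda+1)}{2(1+\sigma)(\lambda-1)}$. Then (i) every receiver type $i\in[-1/2,1/2]$ buys the product if it is good; (ii) no receiver type buys the product if it is bad; (iii) if the product is controversial, then (a) if $\lambda>1$, all receiver types $i\ge\tilde i_\infty$ buy the product; (b) if $\lambda<1$, all receiver types $i\le\tilde i_\infty$ buy the product; (c) if $\lambda=1$, all receiver types buy the product if $\sigma\le1$ and none buys it if $\sigma>1$.
   Context: Setting. Consumer types are $i\in[-1/2,1/2]$, distributed according to a continuous cumulative distribution function $F$ with full support on $[-1/2,1/2]$. A product has a quality vector $(Q_1,Q_2)\in\{0,1\}^2$; a type-$i$ consumer gets payoff $(1/2+i)Q_1+(1/2-i)Q_2$. Version $(1,1)$ is called good, $(0,0)$ bad, and $(1,0),(0,1)$ controversial; their prior probabilities are $q_H,q_1,q_2,q_L$ (for $(1,1),(1,0),(0,1),(0,0)$), all strictly positive and summing to $1$. Given a threshold $R\in(0,1)$, each sender, with type drawn independently from $F$, gives a buy recommendation if her payoff from the product is at least $R$ and a don't-buy recommendation otherwise. In the infinite-learning system the receiver observes the recommendations of infinitely many such independent senders; this reveals whether the product is good, bad or controversial, and if controversial the receiver's posterior on $(1,0),(0,1)$ is $(q_1/(q_1+q_2),q_2/(q_1+q_2))$. The receiver of type $i$ buys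 the recommended product if its posterior expected payoff is at least $U_i^0=q_H+(1/2+i)q_1+(1/2-i)q_2$, the expected payoff of an unrecommended alternative, and otherwise buys the alternative. *)

theory Defs
  imports Complex_Main
begin

(* A quality vector (Q1,Q2) in {0,1}^2 is encoded as a pair of booleans. *)
type_synonym version = "bool \<times> bool"

definition payoff :: "real \<Rightarrow> version \<Rightarrow> real" where
  "payoff i v = (1/2 + i) * of_bool (fst v) + (1/2 - i) * of_bool (snd v)"

definition prior :: "real \<Rightarrow> real \<Rightarrow> real \<Rightarrow> real \<Rightarrow> version \<Rightarrow> real" where
  "prior qH q1 q2 qL v =
     (if v = (True, True) then qH else if v = (True, False) then q1
      else if v = (False, True) then q2 else qL)"

(* expected payoff U_i^0 of the unrecommended alternative *)
definition U0 :: "real \<Rightarrow> real \<Rightarrow> real \<Rightarrow> real \<Rightarrow> real \<Rightarrow> real" where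
  "U0 qH q1 q2 qL i = qH + (1/2 + i) * q1 + (1/2 - i) * q2"

(* what infinite learning reveals about the product *)
datatype revealed = Good | Bad | Controversial

definition versions_of :: "revealed \<Rightarrow> version set" where
  "versions_of c = (case c of
      Good \<Rightarrow> {(True, True)}
    | Bad \<Rightarrow> {(False, False)}
    | Controversial \<Rightarrow> {(True, False), (False, True)})"

definition posterior_payoff ::
  "real \<Rightarrow> real \<Rightarrow> real \<Rightarrow> real \<Rightarrow> revealed \<Rightarrow> real \<Rightarrow> real" where
  "posterior_payoff qH q1 q2 qL c i =
     (\<Sum>v\<in>versions_of c. prior qH q1 q2 qL v * payoff i v) /
     (\<Sum>v\<in>versions_of c. prior qH q1 q2 qL v)"

definition buys :: "real \<Rightarrow> real \<Rightarrow> real \<Rightarrow> real \<Rightarrow> revealed \<Rightarrow> real \<Rightarrow> bool" where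
  "buys qH q1 q2 qL c i \<longleftrightarrow> posterior_payoff qH q1 q2 qL c i \<ge> U0 qH q1 q2 qL i"

definition type_cdf :: "(real \<Rightarrow> real) \<Rightarrow> bool" where
  "type_cdf F \<longleftrightarrow> mono F \<and> continuous_on UNIV F
     \<and> (\<forall>x\<le>-1/2. F x = 0) \<and> (\<forall>x\<ge>1/2. F x = 1)
     \<and> strict_mono_on {-1/2..1/2} F"

definition i_tilde_inf :: "real \<Rightarrow> real \<Rightarrow> real" where
  "i_tilde_inf lam sig = ((sig - 1) * (lam + 1)) / (2 * (1 + sig) * (lam - 1))"

end

theory Submission
  imports Defs
begin

text \<open>Infinite learning reveals the class of the product, so the receiver compares its posterior
  expectation with the prior one \<open>U0\<close>. A good and a bad product have posterior payoff \<open>1\<close>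
  and \<open>0\<close>, which bound \<open>U0\<close> from above and below. For a controversial product, clearing the
  denominator \<open>q1 + q2\<close> and using \<open>qH + q1 + q2 + qL = 1\<close> turns the purchase decision into an
  inequality that is linear in the type \<open>i\<close>, with root \<open>i_tilde_inf\<close>.\<close>

lemma buys_Good_iff: "qH \<noteq> 0 \<Longrightarrow> buys qH q1 q2 qL Good i \<longleftrightarrow> U0 qH q1 q2 qL i \<le> 1"
  by (simp add: buys_def posterior_payoff_def versions_of_def prior_def payoff_def)

lemma buys_Bad_iff: "buys qH q1 q2 qL Bad i \<longleftrightarrow> U0 qH q1 q2 qL i \<le> 0"
  by (simp add: buys_def posterior_payoff_def versions_of_def prior_def payoff_def)

lemma U0_bounds:
  assumes "i \<in> {-1/2..1/2}" "0 < qH" "0 \<le> q1" "0 \<le> q2" "0 \<le> qL" "qH + q1 + q2 + qL = 1"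
  shows "0 < U0 qH q1 q2 qL i" "U0 qH q1 q2 qL i \<le> 1"
proof -
  have "0 \<le> (1/2 + i) * q1" "(1/2 + i) * q1 \<le> q1" "0 \<le> (1/2 - i) * q2" "(1/2 - i) * q2 \<le> q2"
    using assms by (auto intro: mult_left_le_one_le)
  then show "0 < U0 qH q1 q2 qL i" "U0 qH q1 q2 qL i \<le> 1"
    using assms by (simp_all add: U0_def)
qed

lemma buys_Controversial_iff:
  assumes "0 < q1 + q2" "qH + q1 + q2 + qL = 1"
  shows "buys qH q1 q2 qL Controversial i \<longleftrightarrow>
     (q1 + q2) * (qH - qL) \<le> i * (2 * (qH + qL) * (q1 - q2))"
proof -
  have "buys qH q1 q2 qL Controversial i \<longleftrightarrow>
      (q1 + q2) * U0 qH q1 q2 qL i \<le> q1 * (1/2 + i) + q2 * (1/2 - i)"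
    using assms(1)
    by (simp add: buys_def posterior_payoff_def versions_of_def prior_def payoff_def
        pos_le_divide_eq mult.commute)
  moreover have "q1 * (1/2 + i) + q2 * (1/2 - i) - (q1 + q2) * U0 qH q1 q2 qL i
      = (i * (2 * (qH + qL) * (q1 - q2)) - (q1 + q2) * (qH - qL)) / 2"
    using assms(2) unfolding U0_def by algebra
  ultimately show ?thesis
    by argo
qed

lemma i_tilde_inf_ratios:
  assumes "q2 \<noteq> 0" "qL \<noteq> 0"
  shows "i_tilde_inf (q1 / q2) (qH / qL) = (q1 + q2) * (qH - qL) / (2 * (qH + qL) * (q1 - q2))"
proof -
  have "q1 / q2 - 1 = (q1 - q2) / q2" "q1 / q2 + 1 = (q1 + q2) / q2"
       "qH / qL - 1 = (qH - qL) / qL" "1 + qH / qL = (qH + qL) / qL"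
    using assms by (simp_all add: field_simps)
  then show ?thesis
    using assms by (simp add: i_tilde_inf_def)
qed

lemma buys_Controversial_iff_i_tilde_inf_le:
  assumes "0 < q2" "q2 < q1" "0 \<le> qH" "0 < qL" "qH + q1 + q2 + qL = 1"
  shows "buys qH q1 q2 qL Controversial i \<longleftrightarrow> i_tilde_inf (q1 / q2) (qH / qL) \<le> i"
proof -
  have "0 < 2 * (qH + qL) * (q1 - q2)"
    using assms by simp
  then show ?thesis
    using assms by (simp only: buys_Controversial_iff i_tilde_inf_ratios pos_divide_le_eq)
qed

lemma buys_Controversial_iff_le_i_tilde_inf:
  assumes "0 < q1" "q1 < q2" "0 \<le> qH" "0 < qL" "qH + q1 + q2 + qL = 1"
  shows "buys qH q1 q2 qL Controversial i \<longleftrightarrow> i \<le> i_tilde_inf (q1 / q2) (qH / qL)"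
proof -
  have "2 * (qH + qL) * (q1 - q2) < 0"
    using assms by (simp add: mult_pos_neg)
  then show ?thesis
    using assms by (simp only: buys_Controversial_iff i_tilde_inf_ratios neg_le_divide_eq)
qed

lemma buys_Controversial_iff_symmetric:
  assumes "0 < q1" "qH + q1 + q1 + qL = 1"
  shows "buys qH q1 q1 qL Controversial i \<longleftrightarrow> qH \<le> qL"
  using assms by (simp add: buys_Controversial_iff mult_le_0_iff)

theorem lemma4:
  fixes F :: "real \<Rightarrow> real" and R qH q1 q2 qL :: real
  assumes "type_cdf F"
    and "\<forall>i. F (- i) = 1 - F i"
    and "0 < R" and "R < 1"
    and "0 < qH" and "0 < q1" and "0 < q2" and "0 < qL"
    and "qH + q1 + q2 + qL = 1"
  shows "(\<forall>i\<in>{-1/2..1/2}. buys qH q1 q2 qL Good i)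
    \<and> (\<forall>i\<in>{-1/2..1/2}. \<not> buys qH q1 q2 qL Bad i)
    \<and> (q1 / q2 > 1 \<longrightarrow>
          (\<forall>i\<in>{-1/2..1/2}. i \<ge> i_tilde_inf (q1 / q2) (qH / qL) \<longrightarrow>
             buys qH q1 q2 qL Controversial i))
    \<and> (q1 / q2 < 1 \<longrightarrow>
          (\<forall>i\<in>{-1/2..1/2}. i \<le> i_tilde_inf (q1 / q2) (qH / qL) \<longrightarrow>
             buys qH q1 q2 qL Controversial i))
    \<and> (q1 / q2 = 1 \<longrightarrow>
          (qH / qL \<le> 1 \<longrightarrow> (\<forall>i\<in>{-1/2..1/2}. buys qH q1 q2 qL Controversial i))
        \<and> (qH / qL > 1 \<longrightarrow> (\<forall>i\<in>{-1/2..1/2}. \<not> buys qH q1 q2 qL Controversial i)))"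
proof -
  note q = assms(5-9)
  have ratio_gt: "q1 / q2 > 1 \<longleftrightarrow> q2 < q1" and ratio_lt: "q1 / q2 < 1 \<longleftrightarrow> q1 < q2"
    and sigma_le: "qH / qL \<le> 1 \<longleftrightarrow> qH \<le> qL" and sigma_gt: "qH / qL > 1 \<longleftrightarrow> qL < qH"
    using q by (simp_all add: field_simps)
  have ratio_eq: "q1 / q2 = 1 \<longleftrightarrow> q1 = q2"
    using q by auto
  have "\<forall>i\<in>{-1/2..1/2}. buys qH q1 q2 qL Good i \<and> \<not> buys qH q1 q2 qL Bad i"
    using q U0_bounds by (simp add: buys_Good_iff buys_Bad_iff not_le)
  moreover have "q2 < q1 \<Longrightarrow>
      buys qH q1 q2 qL Controversial i \<longleftrightarrow> i_tilde_inf (q1 / q2) (qH / qL) \<le> i" for i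
    using q by (simp add: buys_Controversial_iff_i_tilde_inf_le)
  moreover have "q1 < q2 \<Longrightarrow>
      buys qH q1 q2 qL Controversial i \<longleftrightarrow> i \<le> i_tilde_inf (q1 / q2) (qH / qL)" for i
    using q by (simp add: buys_Controversial_iff_le_i_tilde_inf)
  moreover have "q1 = q2 \<Longrightarrow> buys qH q1 q2 qL Controversial i \<longleftrightarrow> qH \<le> qL" for i
    using q buys_Controversial_iff_symmetric by blast
  ultimately show ?thesis
    by (auto simp: ratio_gt ratio_lt ratio_eq sigma_le sigma_gt)
qed

end
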